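(* Let $X,Y\subseteq\Sigma^*$ be regular languages and let $d$ be the number of states of the minimal deterministic finite automaton recognizing $Y$. Then $\overrightarrow{\mathrm{AH}}_{\mathrm{ned}}(X,Y)\ge\frac{1}{d}\cdot\overrightarrow{\mathrm{AC}}(X,Y)$.
   Context: An edit path from $x$ to $y$ is a sequence $p=(a_1,b_1)\cdots(a_n,b_n)$ with $(a_i,b_i)\in(\Sigma\cup\{\varepsilon\})^2\setminus\{(\varepsilon,\varepsilon)\}$, $a_1\cdots a_n=x$, $b_1\cdots b_n=y$; $|p|=n$ and $\mathrm{wgt}(p)=|\{i:a_i\ne b_i\}|$. $\mathrm{ed}(x,y)=\min_p\mathrm{wgt}(p)$; $\mathrm{ned}(x,y)=\min_p\mathrm{wgt}(p)/|p|$ ($\mathrm{ned}(\varepsilon,\varepsilon)=0$). $\overrightarrow{\mathrm{AH}}_{\mathrm{ned}}(X,Y)=\lim_{k\to\infty}\sup_{x\in X,|x|\ge k}\inf_{y\in Y}\mathrm{ned}(x,y)$ and $\overrightarrow{\mathrm{AC}}(X,Y)=\lim_{n\to\infty}\sup_{x\in X,|x|\ge n}\inf_{y\in Y}\frac{\mathrm{ed}(x,y)}{|x|}$. *)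

theory Defs
  imports "HOL-Analysis.Analysis" "HOL-Library.Extended_Real"
begin

text \<open>Edit operations: a pair (a,b) with a,b in Alph plus epsilon (None = epsilon),
  not both epsilon. An edit path is a list of such pairs.\<close>

type_synonym 'a edit_path = "('a option \<times> 'a option) list"

definition edit_path :: "'a list \<Rightarrow> 'a list \<Rightarrow> 'a edit_path \<Rightarrow> bool" where
  "edit_path x y p \<longleftrightarrow>
     (\<forall>e \<in> set p. e \<noteq> (None, None)) \<and>
     List.map_filter id (map fst p) = x \<and>
     List.map_filter id (map snd p) = y"

definition wgt :: "'a edit_path \<Rightarrow> nat" where
  "wgt p = length (filter (\<lambda>(a, b). a \<noteq> b) p)"

definition ed :: "'a list \<Rightarrow> 'a list \<Rightarrow> nat" where
  "ed x y = (LEAST w. \<exists>p. edit_path x y p \<and> wgt p = w)"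

definition ned :: "'a list \<Rightarrow> 'a list \<Rightarrow> real" where
  "ned x y = (if x = [] \<and> y = [] then 0
              else Inf {real (wgt p) / real (length p) | p. edit_path x y p})"

text \<open>Directed asymptotic Hausdorff distance w.r.t. ned, and directed asymptotic
  edit-distance cost (values in the extended reals; sup over the empty set is -infinity,
  inf over the empty set is +infinity).\<close>

definition AH_ned :: "'a list set \<Rightarrow> 'a list set \<Rightarrow> ereal" where
  "AH_ned X Y = lim (\<lambda>k::nat. SUP x \<in> {x \<in> X. k \<le> length x}. INF y \<in> Y. ereal (ned x y))"

definition AC :: "'a list set \<Rightarrow> 'a list set \<Rightarrow> ereal" where
  "AC X Y = lim (\<lambda>n::nat. SUP x \<in> {x \<in> X. n \<le> length x}.
                 INF y \<in> Y. ereal (real (ed x y) / real (length x)))"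

definition dfa :: "'a set \<Rightarrow> nat set \<Rightarrow> nat \<Rightarrow> (nat \<Rightarrow> 'a \<Rightarrow> nat) \<Rightarrow> nat set \<Rightarrow> bool" where
  "dfa Alph Q q0 \<delta> F \<longleftrightarrow> finite Q \<and> q0 \<in> Q \<and> F \<subseteq> Q \<and>
     (\<forall>q \<in> Q. \<forall>a \<in> Alph. \<delta> q a \<in> Q)"

definition dfa_lang :: "'a set \<Rightarrow> nat \<Rightarrow> (nat \<Rightarrow> 'a \<Rightarrow> nat) \<Rightarrow> nat set \<Rightarrow> 'a list set" where
  "dfa_lang Alph q0 \<delta> F = {w \<in> lists Alph. foldl \<delta> q0 w \<in> F}"

definition regular :: "'a set \<Rightarrow> 'a list set \<Rightarrow> bool" where
  "regular Alph L \<longleftrightarrow> (\<exists>Q q0 \<delta> F. dfa Alph Q q0 \<delta> F \<and> dfa_lang Alph q0 \<delta> F = L)"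

definition min_dfa_states :: "'a set \<Rightarrow> 'a list set \<Rightarrow> nat" where
  "min_dfa_states Alph L = (LEAST n. \<exists>Q q0 \<delta> F. dfa Alph Q q0 \<delta> F \<and>
       dfa_lang Alph q0 \<delta> F = L \<and> card Q = n)"

end

theory Submission
  imports Defs
begin

text \<open>Fix a DFA for \<open>Y\<close> with \<open>d\<close> states and an edit path \<open>p\<close> from \<open>x\<close> (\<open>|x| = n\<close>)
  to some \<open>y \<in> Y\<close> with \<open>I\<close> insertions and \<open>S\<close> deletions and substitutions. Every maximal block
  of consecutive insertions can be replaced by a word of length \<open>< d\<close> that drives the DFA
  between the same two states. There are at most \<open>n + 1\<close> such blocks, so this yields a path
  from \<open>x\<close> to some \<open>y' \<in> Y\<close> with at most \<open>min I ((d - 1) (n + 1))\<close> insertions and still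
  \<open>S\<close> other edits; a short computation gives
  \<open>ed x y' / n \<le> (d + (d - 1) / n) \<cdot> wgt p / |p|\<close>. Taking infima over \<open>p\<close> and \<open>y\<close>,
  suprema over long \<open>x \<in> X\<close> and letting \<open>n \<rightarrow> \<infinity>\<close> gives \<open>AC X Y \<le> d \<cdot> AH_ned X Y\<close>.\<close>

definition path_src :: "'a edit_path \<Rightarrow> 'a list" where
  "path_src p = List.map_filter id (map fst p)"

definition path_tgt :: "'a edit_path \<Rightarrow> 'a list" where
  "path_tgt p = List.map_filter id (map snd p)"

definition ins_count :: "'a edit_path \<Rightarrow> nat" where
  "ins_count p = length (filter (\<lambda>e. fst e = None) p)"

definition del_sub_count :: "'a edit_path \<Rightarrow> nat" where
  "del_sub_count p = length (filter (\<lambda>e. fst e \<noteq> None \<and> fst e \<noteq> snd e) p)"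

definition insertions :: "'a list \<Rightarrow> 'a edit_path" where
  "insertions w = map (\<lambda>b. (None, Some b)) w"

lemma edit_path_iff:
  "edit_path x y p \<longleftrightarrow> (\<forall>e\<in>set p. e \<noteq> (None, None)) \<and> path_src p = x \<and> path_tgt p = y"
  by (simp add: edit_path_def path_src_def path_tgt_def)

lemma path_src_simps [simp]:
  "path_src [] = []"
  "path_src (e # p) = (case fst e of None \<Rightarrow> [] | Some a \<Rightarrow> [a]) @ path_src p"
  "path_src (p @ q) = path_src p @ path_src q"
  by (simp_all add: path_src_def map_filter_def split: option.split)

lemma path_tgt_simps [simp]:
  "path_tgt [] = []"
  "path_tgt (e # p) = (case snd e of None \<Rightarrow> [] | Some b \<Rightarrow> [b]) @ path_tgt p"
  "path_tgt (p @ q) = path_tgt p @ path_tgt q"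
  by (simp_all add: path_tgt_def map_filter_def split: option.split)

lemma ins_count_simps [simp]:
  "ins_count [] = 0"
  "ins_count (e # p) = (if fst e = None then Suc (ins_count p) else ins_count p)"
  "ins_count (p @ q) = ins_count p + ins_count q"
  by (simp_all add: ins_count_def)

lemma del_sub_count_simps [simp]:
  "del_sub_count [] = 0"
  "del_sub_count (e # p) =
    (if fst e \<noteq> None \<and> fst e \<noteq> snd e then Suc (del_sub_count p) else del_sub_count p)"
  "del_sub_count (p @ q) = del_sub_count p + del_sub_count q"
  by (simp_all add: del_sub_count_def)

lemma wgt_simps [simp]:
  "wgt [] = 0"
  "wgt (e # p) = (if fst e \<noteq> snd e then Suc (wgt p) else wgt p)"
  by (simp_all add: wgt_def split: prod.split)

lemma insertions_simps [simp]:
  "path_src (insertions w) = []"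
  "path_tgt (insertions w) = w"
  "ins_count (insertions w) = length w"
  "del_sub_count (insertions w) = 0"
  "(None, None) \<notin> set (insertions w)"
  by (induction w) (auto simp: insertions_def)

lemma wgt_eq_ins_count_plus_del_sub_count:
  "\<forall>e\<in>set p. e \<noteq> (None, None) \<Longrightarrow> wgt p = ins_count p + del_sub_count p"
  by (induction p) (auto simp: prod_eq_iff)

lemma del_sub_count_le_length_path_src: "del_sub_count p \<le> length (path_src p)"
  by (induction p) (auto split: option.split)

lemma length_edit_path:
  "\<forall>e\<in>set p. e \<noteq> (None, None) \<Longrightarrow> length p = ins_count p + length (path_src p)"
  by (induction p) (auto simp: prod_eq_iff split: option.split)

lemma insertion_only_path:
  assumes "\<forall>e\<in>set p. fst e = None"
  shows "path_src p = [] \<and> del_sub_count p = 0 \<and> length (path_tgt p) \<le> ins_count p"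
  using assms by (induction p) (auto split: option.split)

lemma edit_path_exists: "edit_path x y (map (\<lambda>a. (Some a, None)) x @ insertions y)"
proof -
  have "path_src (map (\<lambda>a. (Some a, None)) x) = x" "path_tgt (map (\<lambda>a. (Some a, None)) x) = []"
    by (induction x) simp_all
  then show ?thesis
    by (auto simp: edit_path_iff)
qed

lemma ned_nonneg: "0 \<le> ned x y"
  using edit_path_exists[of x y] by (auto simp: ned_def intro!: cInf_greatest)

lemma ned_eq_INF:
  assumes "x \<noteq> []"
  shows "ereal (ned x y) = (INF p\<in>{p. edit_path x y p}. ereal (real (wgt p) / real (length p)))"
proof -
  let ?R = "(\<lambda>p. real (wgt p) / real (length p)) ` {p. edit_path x y p}"
  have "bdd_below ?R" "?R \<noteq> {}"
    using edit_path_exists[of x y] by (auto intro!: bdd_belowI[of _ 0])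
  then have "ereal (Inf ?R) = (INF r\<in>?R. ereal r)"
    by (rule ereal_Inf')
  then show ?thesis
    using assms by (simp add: ned_def setcompr_eq_image image_image)
qed

lemma foldl_in_states:
  "dfa Alph Q q0 \<delta> F \<Longrightarrow> q \<in> Q \<Longrightarrow> w \<in> lists Alph \<Longrightarrow> foldl \<delta> q w \<in> Q"
  by (induction w arbitrary: q) (auto simp: dfa_def)

lemma dfa_card_pos: "dfa Alph Q q0 \<delta> F \<Longrightarrow> 0 < card Q"
  by (auto simp: dfa_def card_gt_0_iff)

lemma dfa_shorter_word:
  assumes D: "dfa Alph Q q0 \<delta> F" and q: "q \<in> Q" and w: "w \<in> lists Alph"
    and long: "card Q \<le> length w"
  obtains w' where "w' \<in> lists Alph" "foldl \<delta> q w' = foldl \<delta> q w" "length w' < length w"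
proof -
  define state where "state i = foldl \<delta> q (take i w)" for i
  have "state ` {0..length w} \<subseteq> Q"
    using foldl_in_states[OF D q] w by (auto simp: state_def dest: in_set_takeD)
  with long have "\<not> inj_on state {0..length w}"
    using card_inj_on_le[of state "{0..length w}" Q] D by (auto simp: dfa_def)
  then obtain i j where "i \<le> length w" "j \<le> length w" "i \<noteq> j" "state i = state j"
    unfolding inj_on_def by auto
  then obtain i j where ij: "i < j" "j \<le> length w" "state i = state j"
    using that[of i j] that[of j i] by (cases "i < j") auto
  define w' where "w' = take i w @ drop j w"
  have "foldl \<delta> q w' = foldl \<delta> (state j) (drop j w)"
    using ij by (simp add: w'_def state_def)
  also have "\<dots> = foldl \<delta> q w"
    unfolding state_def foldl_append[symmetric] by simp
  finally have "foldl \<delta> q w' = foldl \<delta> q w" .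
  moreover have "w' \<in> lists Alph"
    using w set_take_subset[of i w] set_drop_subset[of j w] by (auto simp: w'_def lists_eq_set)
  moreover have "length w' < length w"
    using ij by (simp add: w'_def)
  ultimately show ?thesis
    using that by blast
qed

lemma dfa_short_word:
  assumes D: "dfa Alph Q q0 \<delta> F" and q: "q \<in> Q"
  shows "w \<in> lists Alph \<Longrightarrow> \<exists>w'\<in>lists Alph. foldl \<delta> q w' = foldl \<delta> q w \<and>
           length w' < card Q \<and> length w' \<le> length w"
proof (induction w rule: length_induct)
  case (1 w)
  show ?case
  proof (cases "length w < card Q")
    case True
    with "1.prems" show ?thesis
      by blast
  next
    case False
    then have "card Q \<le> length w"
      by simp
    then obtain w2 where w2: "w2 \<in> lists Alph" "foldl \<delta> q w2 = foldl \<delta> q w" "length w2 < length w"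
      using dfa_shorter_word[OF D q "1.prems"] by blast
    then obtain w' where "w' \<in> lists Alph" "foldl \<delta> q w' = foldl \<delta> q w2"
        "length w' < card Q" "length w' \<le> length w2"
      using "1.IH" by blast
    with w2 show ?thesis
      by (intro bexI[of _ w']) auto
  qed
qed

lemma shorten_insertion_block:
  assumes D: "dfa Alph Q q0 \<delta> F" and q: "q \<in> Q"
    and ins: "\<forall>e\<in>set p. fst e = None" and tgt: "path_tgt p \<in> lists Alph"
  obtains w where "w \<in> lists Alph" "foldl \<delta> q w = foldl \<delta> q (path_tgt p)"
    "length w < card Q" "length w \<le> ins_count p"
proof -
  obtain w where w: "w \<in> lists Alph" "foldl \<delta> q w = foldl \<delta> q (path_tgt p)"
      "length w < card Q" "length w \<le> length (path_tgt p)"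
    using dfa_short_word[OF D q tgt] by blast
  moreover have "length w \<le> ins_count p"
    using w(4) insertion_only_path[OF ins] by linarith
  ultimately show ?thesis
    using that by blast
qed

lemma shorten_insertions:
  assumes D: "dfa Alph Q q0 \<delta> F"
  shows "q \<in> Q \<Longrightarrow> \<forall>e\<in>set p. e \<noteq> (None, None) \<Longrightarrow> path_tgt p \<in> lists Alph \<Longrightarrow>
    \<exists>p'. (\<forall>e\<in>set p'. e \<noteq> (None, None)) \<and> path_tgt p' \<in> lists Alph \<and>
      path_src p' = path_src p \<and> del_sub_count p' = del_sub_count p \<and>
      foldl \<delta> q (path_tgt p') = foldl \<delta> q (path_tgt p) \<and> ins_count p' \<le> ins_count p \<and>
      ins_count p' \<le> (card Q - 1) * (length (path_src p) + 1)"
proof (induction p arbitrary: q rule: length_induct)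
  case (1 p)
  define blk where "blk = takeWhile (\<lambda>e. fst e = None) p"
  define rest0 where "rest0 = dropWhile (\<lambda>e. fst e = None) p"
  have p: "p = blk @ rest0"
    by (simp add: blk_def rest0_def)
  have blk_ins: "\<forall>e\<in>set blk. fst e = None"
    by (auto simp: blk_def dest: set_takeWhileD)
  note blk_props = insertion_only_path[OF blk_ins]
  have "path_tgt blk \<in> lists Alph"
    using "1.prems"(3) by (simp add: p)
  then obtain w where w: "w \<in> lists Alph" "foldl \<delta> q w = foldl \<delta> q (path_tgt blk)"
      "length w < card Q" "length w \<le> ins_count blk"
    using shorten_insertion_block[OF D "1.prems"(1) blk_ins] by blast
  show ?case
  proof (cases rest0)
    case Nil
    then show ?thesis
      using w blk_props by (intro exI[of _ "insertions w"]) (auto simp: p)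
  next
    case (Cons e rest)
    then have p: "p = blk @ e # rest"
      by (simp add: p)
    obtain a where a: "fst e = Some a"
      using Cons hd_dropWhile[of "\<lambda>e. fst e = None" p] by (auto simp: rest0_def)
    define q' where "q' = foldl \<delta> q (path_tgt (blk @ [e]))"
    have "q' \<in> Q"
      using foldl_in_states[OF D "1.prems"(1), of "path_tgt (blk @ [e])"] "1.prems"(3)
      by (simp add: q'_def p)
    moreover have "length rest < length p" "\<forall>e\<in>set rest. e \<noteq> (None, None)"
        "path_tgt rest \<in> lists Alph"
      using "1.prems"(2,3) by (simp_all add: p)
    ultimately obtain rest' where rest': "\<forall>e\<in>set rest'. e \<noteq> (None, None)"
        "path_tgt rest' \<in> lists Alph" "path_src rest' = path_src rest"
        "del_sub_count rest' = del_sub_count rest"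
        "foldl \<delta> q' (path_tgt rest') = foldl \<delta> q' (path_tgt rest)"
        "ins_count rest' \<le> ins_count rest"
        "ins_count rest' \<le> (card Q - 1) * (length (path_src rest) + 1)"
      using "1.IH" by blast
    let ?p' = "insertions w @ e # rest'"
    have "length w + ins_count rest' \<le> (card Q - 1) + (card Q - 1) * (length (path_src rest) + 1)"
      using w(3) rest'(7) by linarith
    also have "\<dots> = (card Q - 1) * (length (path_src p) + 1)"
      using blk_props by (simp add: p a)
    finally have "ins_count ?p' \<le> (card Q - 1) * (length (path_src p) + 1)"
      by (simp add: a)
    moreover have "ins_count ?p' \<le> ins_count p"
      using w(4) rest'(6) by (simp add: p a)
    moreover have "foldl \<delta> q (path_tgt ?p') = foldl \<delta> q (path_tgt p)"
      using w(2) rest'(5) by (simp add: p q'_def)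
    moreover have "path_tgt ?p' \<in> lists Alph"
      using w(1) rest'(2) "1.prems"(3) by (simp add: p)
    moreover have "path_src ?p' = path_src p" "del_sub_count ?p' = del_sub_count p"
      using blk_props rest'(3,4) by (simp_all add: p)
    moreover have "\<forall>e\<in>set ?p'. e \<noteq> (None, None)"
      using rest'(1) "1.prems"(2) by (auto simp: p)
    ultimately show ?thesis
      by blast
  qed
qed

text \<open>\<open>I\<close> and \<open>I'\<close> count the insertions before and after shortening, \<open>S\<close> the deletions and
  substitutions, \<open>n = |x|\<close>, and \<open>(d - 1) (n + 1)\<close> bounds \<open>I'\<close> (\<open>d - 1\<close> per gap of \<open>x\<close>).\<close>

lemma insertion_trade_off:
  fixes I' I S n d :: nat
  assumes "I' \<le> I" "I' \<le> (d - 1) * (n + 1)" "S \<le> n" "0 < n" "0 < d"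
  shows "real (I' + S) / real n \<le> (real d + real (d - 1) / real n) * (real (I + S) / real (n + I))"
proof -
  define K where "K = (d - 1) * (n + 1)"
  have "(I' + S) * (n + I) \<le> (K + n) * (I + S)"
  proof (cases "I \<le> K")
    case True
    have "(I' + S) * (n + I) \<le> (I + S) * (n + I)"
      using assms by (intro mult_right_mono) auto
    also have "\<dots> \<le> (I + S) * (n + K)"
      using True by (intro mult_left_mono) auto
    finally show ?thesis
      by (simp add: algebra_simps)
  next
    case False
    obtain t u where "n = S + t" "I = K + u"
      using assms(3) False by (metis le_Suc_ex nat_le_linear)
    moreover have "(I' + S) * (n + I) \<le> (K + S) * (n + I)"
      using assms by (intro mult_right_mono) (auto simp: K_def)
    ultimately show ?thesis
      by (simp add: algebra_simps)
  qed
  then have cross: "real (I' + S) * real (n + I) \<le> real (K + n) * real (I + S)"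
    by (metis of_nat_le_iff of_nat_mult)
  have nI: "real (n + I) \<noteq> 0"
    using assms(4) by simp
  have "real (I' + S) / real n = real (I' + S) * real (n + I) / (real n * real (n + I))"
    using nI by (rule nonzero_mult_divide_mult_cancel_right[symmetric])
  also have "\<dots> \<le> real (K + n) * real (I + S) / (real n * real (n + I))"
    using cross by (rule divide_right_mono) simp
  also have "\<dots> = real (K + n) / real n * (real (I + S) / real (n + I))"
    by (rule times_divide_times_eq[symmetric])
  also have "real (K + n) / real n = real d + real (d - 1) / real n"
  proof -
    obtain m where "d = Suc m"
      using assms(5) gr0_implies_Suc by blast
    then show ?thesis
      using assms(4) by (simp add: K_def field_simps)
  qed
  finally show ?thesis .
qed

lemma dfa_lang_ed_ratio_le:
  assumes D: "dfa Alph Q q0 \<delta> F" and y: "y \<in> dfa_lang Alph q0 \<delta> F"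
    and p: "edit_path x y p" and x: "x \<noteq> []"
  shows "\<exists>y'\<in>dfa_lang Alph q0 \<delta> F. real (ed x y') / real (length x) \<le>
     (real (card Q) + real (card Q - 1) / real (length x)) * (real (wgt p) / real (length p))"
proof -
  have q0: "q0 \<in> Q"
    using D by (simp add: dfa_def)
  have valid: "\<forall>e\<in>set p. e \<noteq> (None, None)" and src: "path_src p = x" and tgt: "path_tgt p = y"
    using p by (auto simp: edit_path_iff)
  obtain p' where valid': "\<forall>e\<in>set p'. e \<noteq> (None, None)" and p': "path_tgt p' \<in> lists Alph"
      "path_src p' = x" "del_sub_count p' = del_sub_count p"
      "foldl \<delta> q0 (path_tgt p') = foldl \<delta> q0 y" "ins_count p' \<le> ins_count p"
      "ins_count p' \<le> (card Q - 1) * (length x + 1)"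
    using shorten_insertions[OF D q0 valid] y src tgt by (auto simp: dfa_lang_def)
  define n where "n = length x"
  have n: "0 < n"
    using x by (simp add: n_def)
  have "ed x (path_tgt p') \<le> wgt p'"
    unfolding ed_def using valid' p' by (intro Least_le) (auto simp: edit_path_iff)
  then have "real (ed x (path_tgt p')) / real n \<le> real (ins_count p' + del_sub_count p) / real n"
    using wgt_eq_ins_count_plus_del_sub_count[OF valid'] p' by (simp add: divide_right_mono)
  also have "\<dots> \<le> (real (card Q) + real (card Q - 1) / real n) *
      (real (ins_count p + del_sub_count p) / real (n + ins_count p))"
    using p' n dfa_card_pos[OF D] del_sub_count_le_length_path_src[of p] src
    by (intro insertion_trade_off) (auto simp: n_def)
  also have "\<dots> = (real (card Q) + real (card Q - 1) / real n) * (real (wgt p) / real (length p))"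
    using length_edit_path[OF valid] wgt_eq_ins_count_plus_del_sub_count[OF valid]
    by (simp add: src n_def)
  finally have "real (ed x (path_tgt p')) / real (length x) \<le>
      (real (card Q) + real (card Q - 1) / real (length x)) * (real (wgt p) / real (length p))"
    by (simp only: n_def)
  moreover have "path_tgt p' \<in> dfa_lang Alph q0 \<delta> F"
    using p' y by (simp add: dfa_lang_def)
  ultimately show ?thesis
    by blast
qed

lemma ereal_cmult_INF: "0 < c \<Longrightarrow> ereal c * (INF i\<in>I. f i) = (INF i\<in>I. ereal c * f i)"
  using ereal_Inf_cmult[of c "\<lambda>z. z \<in> f ` I"] by (simp add: setcompr_eq_image image_image)

lemma INF_ed_ratio_le_mult_INF_ned:
  assumes D: "dfa Alph Q q0 \<delta> F" and x: "x \<noteq> []"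
  shows "(INF y\<in>dfa_lang Alph q0 \<delta> F. ereal (real (ed x y) / real (length x))) \<le>
    ereal (real (card Q) + real (card Q - 1) / real (length x)) *
    (INF y\<in>dfa_lang Alph q0 \<delta> F. ereal (ned x y))"
proof -
  define L where "L = dfa_lang Alph q0 \<delta> F"
  define c where "c = real (card Q) + real (card Q - 1) / real (length x)"
  have c: "0 < c"
    using dfa_card_pos[OF D] by (simp add: c_def add_pos_nonneg)
  have "(INF y\<in>L. ereal (real (ed x y) / real (length x))) \<le>
      (INF y\<in>L. INF p\<in>{p. edit_path x y p}. ereal c * ereal (real (wgt p) / real (length p)))"
  proof (intro INF_greatest)
    fix y p assume "y \<in> L" "p \<in> {p. edit_path x y p}"
    then obtain y' where "y' \<in> L"
        "real (ed x y') / real (length x) \<le> c * (real (wgt p) / real (length p))"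
      using dfa_lang_ed_ratio_le[OF D _ _ x] by (auto simp: L_def c_def)
    then show "(INF y\<in>L. ereal (real (ed x y) / real (length x))) \<le>
        ereal c * ereal (real (wgt p) / real (length p))"
      by (intro INF_lower2[OF \<open>y' \<in> L\<close>]) simp
  qed
  also have "\<dots> = ereal c * (INF y\<in>L. ereal (ned x y))"
    by (simp add: ereal_cmult_INF c ned_eq_INF x)
  finally show ?thesis
    unfolding L_def c_def .
qed

lemma tendsto_lim_tail_SUP:
  fixes f :: "'a list \<Rightarrow> 'b :: {complete_linorder, linorder_topology}"
  shows "(\<lambda>k. SUP x\<in>{x\<in>X. k \<le> length x}. f x) \<longlonglongrightarrow> lim (\<lambda>k. SUP x\<in>{x\<in>X. k \<le> length x}. f x)"
proof -
  have "decseq (\<lambda>k. SUP x\<in>{x\<in>X. k \<le> length x}. f x)"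
    by (auto simp: decseq_def intro!: SUP_subset_mono)
  then show ?thesis
    using LIMSEQ_INF convergent_LIMSEQ_iff convergent_def by blast
qed

lemma lim_tail_SUP_le_mult:
  fixes f g :: "'a list \<Rightarrow> ereal"
  assumes bound: "\<And>k x. x \<in> X \<Longrightarrow> 0 < k \<Longrightarrow> k \<le> length x \<Longrightarrow> f x \<le> ereal (c k) * g x"
    and c_nonneg: "\<And>k. 0 \<le> c k" and c_lim: "c \<longlonglongrightarrow> a" and a: "0 < a"
  shows "lim (\<lambda>k. SUP x\<in>{x\<in>X. k \<le> length x}. f x) \<le>
    ereal a * lim (\<lambda>k. SUP x\<in>{x\<in>X. k \<le> length x}. g x)"
proof (rule LIMSEQ_le[OF tendsto_lim_tail_SUP])
  show "(\<lambda>k. ereal (c k) * (SUP x\<in>{x\<in>X. k \<le> length x}. g x)) \<longlonglongrightarrow>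
      ereal a * lim (\<lambda>k. SUP x\<in>{x\<in>X. k \<le> length x}. g x)"
    using c_lim a by (intro tendsto_mult_ereal tendsto_lim_tail_SUP) auto
  have "(SUP x\<in>{x\<in>X. k \<le> length x}. f x) \<le> ereal (c k) * (SUP x\<in>{x\<in>X. k \<le> length x}. g x)"
    if "0 < k" for k
  proof (rule SUP_least)
    fix x assume x: "x \<in> {x\<in>X. k \<le> length x}"
    then have "f x \<le> ereal (c k) * g x"
      using bound that by blast
    also have "\<dots> \<le> ereal (c k) * (SUP x\<in>{x\<in>X. k \<le> length x}. g x)"
      using x c_nonneg by (intro ereal_mult_left_mono SUP_upper) auto
    finally show "f x \<le> ereal (c k) * (SUP x\<in>{x\<in>X. k \<le> length x}. g x)" .
  qed
  then show "\<exists>N. \<forall>k\<ge>N. (SUP x\<in>{x\<in>X. k \<le> length x}. f x) \<le>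
      ereal (c k) * (SUP x\<in>{x\<in>X. k \<le> length x}. g x)"
    by (intro exI[of _ 1]) auto
qed

lemma AC_le_card_mult_AH_ned:
  assumes D: "dfa Alph Q q0 \<delta> F"
  shows "AC X (dfa_lang Alph q0 \<delta> F) \<le> ereal (card Q) * AH_ned X (dfa_lang Alph q0 \<delta> F)"
proof -
  define L where "L = dfa_lang Alph q0 \<delta> F"
  define c where "c k = real (card Q) + real (card Q - 1) / real k" for k :: nat
  have "c \<longlonglongrightarrow> real (card Q)"
    unfolding c_def using tendsto_add[OF tendsto_const lim_const_over_n] by simp
  moreover have "(INF y\<in>L. ereal (real (ed x y) / real (length x))) \<le>
      ereal (c k) * (INF y\<in>L. ereal (ned x y))" if x: "x \<in> X" "0 < k" "k \<le> length x" for k x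
  proof -
    have "(INF y\<in>L. ereal (real (ed x y) / real (length x))) \<le>
        ereal (c (length x)) * (INF y\<in>L. ereal (ned x y))"
      unfolding c_def L_def using x by (intro INF_ed_ratio_le_mult_INF_ned[OF D]) auto
    also have "\<dots> \<le> ereal (c k) * (INF y\<in>L. ereal (ned x y))"
      using x by (intro ereal_mult_right_mono INF_greatest)
        (auto simp: c_def ned_nonneg intro!: divide_left_mono mult_pos_pos)
    finally show ?thesis .
  qed
  moreover have "0 \<le> c k" for k
    by (simp add: c_def)
  ultimately show ?thesis
    unfolding AC_def AH_ned_def L_def[symmetric]
    using dfa_card_pos[OF D] by (intro lim_tail_SUP_le_mult[where c = c]) auto
qed

lemma min_dfa_states_attained:
  assumes "regular Alph L"
  shows "\<exists>Q q0 \<delta> F. dfa Alph Q q0 \<delta> F \<and> dfa_lang Alph q0 \<delta> F = L \<and> card Q = min_dfa_states Alph L"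
  unfolding min_dfa_states_def
  by (rule LeastI_ex) (use assms in \<open>auto simp: regular_def\<close>)

theorem mainTheorem16:
  fixes Alph :: "'a set" and X Y :: "'a list set"
  assumes "finite Alph"
    and "regular Alph X" and "regular Alph Y"
    and "d = min_dfa_states Alph Y"
  shows "AH_ned X Y \<ge> ereal (1 / real d) * AC X Y"
proof -
  obtain Q q0 \<delta> F where D: "dfa Alph Q q0 \<delta> F" and Y: "dfa_lang Alph q0 \<delta> F = Y"
    and d: "card Q = d"
    using min_dfa_states_attained[OF assms(3)] assms(4) by blast
  have "AC X Y \<le> ereal (real d) * AH_ned X Y"
    using AC_le_card_mult_AH_ned[OF D, of X] by (simp add: Y d)
  then have "ereal (1 / real d) * AC X Y \<le> ereal (1 / real d) * (ereal (real d) * AH_ned X Y)"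
    by (rule ereal_mult_left_mono) simp
  also have "\<dots> = AH_ned X Y"
    using dfa_card_pos[OF D] d by (simp flip: mult.assoc)
  finally show ?thesis .
qed

end
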